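(* Let $\sigma>0$, $\rho_1>0$ and let $L\ge1$ be an integer. Then, entrywise, $$\mathbf M_1^{L}\,\vec W_{\rho_1}=\int_{\mathbb R}(x+\sigma)^L\,\vec U(x)\,\mu_{\rho_1}(dx);$$ equivalently, for every $m\ge0$, $$\sum_{n=0}^\infty\rho_1^n\sum_{\vec\gamma\in\mathcal M^{(L)}_{m,n}}w(\vec\gamma)=\int_{\mathbb R}(x+\sigma)^Lu_m(x)\,\mu_{\rho_1}(dx).$$
   Context: $\mathbf M_1$ is the infinite tridiagonal matrix indexed by $\mathbb Z_{\ge0}\times\mathbb Z_{\ge0}$ with entries $(\mathbf M_1)_{n,n}=\sigma$, $(\mathbf M_1)_{n,n+1}=(\mathbf M_1)_{n+1,n}=1$ and all other entries $0$. $\vec W_{\rho_1}=(1,\rho_1,\rho_1^2,\dots)^T$ and $\vec U(x)=(u_0(x),u_1(x),\dots)^T$, where $u_n$ are the monic Chebyshev polynomials of the second kind: $u_{-1}=0$, $u_0=1$, $xu_n=u_{n+1}+u_{n-1}$. A Motzkin path of length $L$ is a sequence $(\gamma_0,\dots,\gamma_L)$ of non-negative integers with $|\gamma_k-\gamma_{k-1}|\le1$; $\mathcal M^{(L)}_{m,n}$ is the set of those with $\gamma_0=m,\gamma_L=n$; $w(\vec\gamma)=\sigma^{\#\{k:\gamma_k=\gamma_{k-1}\}}$. For $\rho>0$, $\mu_\rho$ is the probability measure $$\mu_\rho(dx)=\frac{1}{2\pi}\frac{\sqrt{4-x^2}}{1-\rho x+\rho^2}\mathbf 1_{\{|x|<2\}}dx+\Big(1-\frac{1}{\rho^2}\Big)_+\delta_{\rho+1/\rho}(dx),$$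 with $t_+=\max\{t,0\}$. *)

theory Defs
  imports "HOL-Analysis.Analysis"
begin

fun cheb_u :: "nat \<Rightarrow> real \<Rightarrow> real" where
  "cheb_u 0 x = 1"
| "cheb_u (Suc 0) x = x"
| "cheb_u (Suc (Suc n)) x = x * cheb_u (Suc n) x - cheb_u n x"

definition motzkin_paths :: "nat \<Rightarrow> nat \<Rightarrow> nat \<Rightarrow> nat list set" where
  "motzkin_paths L m n = {\<gamma>. length \<gamma> = Suc L \<and> \<gamma> ! 0 = m \<and> \<gamma> ! L = n \<and>
      (\<forall>k\<in>{1..L}. \<bar>int (\<gamma> ! k) - int (\<gamma> ! (k - 1))\<bar> \<le> 1)}"

definition motzkin_weight :: "real \<Rightarrow> nat list \<Rightarrow> real" where
  "motzkin_weight \<sigma> \<gamma> = \<sigma> ^ card {k\<in>{1..length \<gamma> - 1}. \<gamma> ! k = \<gamma> ! (k - 1)}"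

definition mu_density :: "real \<Rightarrow> real \<Rightarrow> real" where
  "mu_density \<rho> x = indicator {-2<..<2} x * sqrt (4 - x\<^sup>2) / (2 * pi * (1 - \<rho> * x + \<rho>\<^sup>2))"

definition mu :: "real \<Rightarrow> real measure" where
  "mu \<rho> = measure_of UNIV (sets borel)
     (\<lambda>A. emeasure (density lborel (\<lambda>x. ennreal (mu_density \<rho> x))) A
          + ennreal (max 0 (1 - 1 / \<rho>\<^sup>2)) * indicator A (\<rho> + 1 / \<rho>))"

end

theory Submission
  imports Defs
begin

(* Both sides satisfy the same recursion in L. On the path side, a path of length L + 1 from m is a
   step from m to a neighbour m' followed by a path of length L from m'; on the integral side,
   (x + sigma) u_m(x) = sigma u_m(x) + u_(m+1)(x) + u_(m-1)(x). So it suffices to show that the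
   Chebyshev moments of mu_rho are the entries rho^m of W_rho.
   On the absolutely continuous part, multiplying the recurrence by the denominator 1 - rho x + rho^2
   of the density and using the orthogonality of u_n for the semicircle weight sqrt(4 - x^2) gives
   an inhomogeneous three-term recurrence for the moments D_n. It has the explicit solution rho^n
   (rho <= 1) or rho^-(n+2) (rho > 1); the difference of two solutions is a multiple of
   u_n(rho + 1/rho), which grows at least linearly, whereas D_n is bounded for rho <> 1 (for rho = 1,
   D_0 = 1 is computed directly). The atom at rho + 1/rho contributes the remaining
   rho^n - rho^-(n+2) when rho > 1. *)

section \<open>Adding a point mass to a measure\<close>

definition add_point_mass :: "'a measure \<Rightarrow> real \<Rightarrow> 'a \<Rightarrow> 'a measure" where
  "add_point_mass M c a = measure_of (space M) (sets M) (\<lambda>A. emeasure M A + ennreal c * indicator A a)"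

lemma sets_add_point_mass [simp, measurable_cong]: "sets (add_point_mass M c a) = sets M"
  by (simp add: add_point_mass_def)

lemma space_add_point_mass [simp]: "space (add_point_mass M c a) = space M"
  by (simp add: add_point_mass_def)

lemma emeasure_add_point_mass:
  assumes "A \<in> sets M"
  shows "emeasure (add_point_mass M c a) A = emeasure M A + ennreal c * indicator A a"
  unfolding add_point_mass_def
proof (rule emeasure_measure_of_sigma[OF sets.sigma_algebra_axioms _ _ assms])
  show "positive (sets M) (\<lambda>A. emeasure M A + ennreal c * indicator A a)"
    by (simp add: positive_def)
  show "countably_additive (sets M) (\<lambda>A. emeasure M A + ennreal c * indicator A a)"
  proof (rule countably_additiveI)
    fix B :: "nat \<Rightarrow> 'a set"
    assume B: "range B \<subseteq> sets M" "disjoint_family B"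
    have "(\<Sum>i. emeasure M (B i) + ennreal c * indicator (B i) a)
        = (\<Sum>i. emeasure M (B i)) + ennreal c * (\<Sum>i. indicator (B i) a)"
      by (simp add: suminf_add[symmetric])
    also have "\<dots> = emeasure M (\<Union>i. B i) + ennreal c * indicator (\<Union>i. B i) a"
      using B by (simp add: suminf_emeasure suminf_indicator sets.countable_UN)
    finally show "(\<Sum>i. emeasure M (B i) + ennreal c * indicator (B i) a)
        = emeasure M (\<Union>i. B i) + ennreal c * indicator (\<Union>i. B i) a" .
  qed
qed

lemma nn_integral_add_point_mass:
  assumes "f \<in> borel_measurable M" "a \<in> space M"
  shows "(\<integral>\<^sup>+x. f x \<partial>add_point_mass M c a) = (\<integral>\<^sup>+x. f x \<partial>M) + ennreal c * f a"
proof -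
  have "f \<in> borel_measurable (add_point_mass M c a)" using assms(1) by simp
  then show ?thesis
  proof (induction rule: borel_measurable_induct)
    case (cong f g)
    have "(\<integral>\<^sup>+x. f x \<partial>add_point_mass M c a) = (\<integral>\<^sup>+x. g x \<partial>add_point_mass M c a)"
      "(\<integral>\<^sup>+x. f x \<partial>M) = (\<integral>\<^sup>+x. g x \<partial>M)"
      using cong.hyps(3) by (auto intro: nn_integral_cong)
    then show ?case using cong assms(2) by simp
  next
    case (set A)
    then show ?case using assms(2) by (simp add: emeasure_add_point_mass)
  next
    case (mult u k)
    then show ?case by (simp add: nn_integral_cmult algebra_simps)
  next
    case (add u v)
    then show ?case by (simp add: nn_integral_add algebra_simps)
  next
    case (seq U)
    have "(\<integral>\<^sup>+x. (SUP i. U i) x \<partial>add_point_mass M c a)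
        = (SUP i. \<integral>\<^sup>+x. U i x \<partial>add_point_mass M c a)"
      unfolding SUP_apply using seq by (intro nn_integral_monotone_convergence_SUP) auto
    also have "\<dots> = (SUP i. (\<integral>\<^sup>+x. U i x \<partial>M) + ennreal c * U i a)"
      using seq by simp
    also have "\<dots> = (SUP i. \<integral>\<^sup>+x. U i x \<partial>M) + (SUP i. ennreal c * U i a)"
      using seq by (intro ennreal_SUP_add)
        (auto simp: incseq_def le_fun_def intro!: nn_integral_mono mult_left_mono)
    also have "\<dots> = (\<integral>\<^sup>+x. (SUP i. U i) x \<partial>M) + ennreal c * (SUP i. U i) a"
      unfolding SUP_apply using seq
      by (simp add: nn_integral_monotone_convergence_SUP SUP_mult_left_ennreal image_comp)
    finally show ?case .
  qed
qed

lemma integrable_add_point_mass: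
  fixes f :: "'a \<Rightarrow> 'b::{banach, second_countable_topology}"
  assumes "integrable M f" "a \<in> space M"
  shows "integrable (add_point_mass M c a) f"
proof (rule integrableI_bounded)
  show "f \<in> borel_measurable (add_point_mass M c a)" using assms(1) by simp
  have "(\<integral>\<^sup>+x. norm (f x) \<partial>M) < \<infinity>"
    using assms(1) by (simp add: integrable_iff_bounded)
  then show "(\<integral>\<^sup>+x. norm (f x) \<partial>add_point_mass M c a) < \<infinity>"
    using assms by (simp add: nn_integral_add_point_mass ennreal_mult_less_top)
qed

lemma integral_add_point_mass:
  fixes f :: "'a \<Rightarrow> real"
  assumes f: "integrable M f" and a: "a \<in> space M" and c: "c \<ge> 0"
  shows "integral\<^sup>L (add_point_mass M c a) f = integral\<^sup>L M f + c * f a"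
proof -
  have nonneg: "integral\<^sup>L (add_point_mass M c a) h = integral\<^sup>L M h + c * h a"
    if h: "integrable M h" "\<And>x. h x \<ge> 0" for h
  proof -
    have "ennreal (integral\<^sup>L (add_point_mass M c a) h) = (\<integral>\<^sup>+x. h x \<partial>add_point_mass M c a)"
      using h a by (simp add: nn_integral_eq_integral integrable_add_point_mass)
    also have "\<dots> = ennreal (integral\<^sup>L M h + c * h a)"
      using h a c
      by (simp add: nn_integral_add_point_mass nn_integral_eq_integral ennreal_mult)
    finally show ?thesis
      using h c by (subst (asm) ennreal_inj) (auto intro!: integral_nonneg)
  qed
  have pos_neg: "integral\<^sup>L N f = integral\<^sup>L N (\<lambda>x. max 0 (f x)) - integral\<^sup>L N (\<lambda>x. max 0 (- f x))"
    if "integrable N f" for N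
  proof -
    have "integral\<^sup>L N f = integral\<^sup>L N (\<lambda>x. max 0 (f x) - max 0 (- f x))"
      by (intro Bochner_Integration.integral_cong) auto
    then show ?thesis
      using that by simp
  qed
  have pos: "integral\<^sup>L (add_point_mass M c a) (\<lambda>x. max 0 (f x))
      = integral\<^sup>L M (\<lambda>x. max 0 (f x)) + c * max 0 (f a)"
    using f by (intro nonneg) auto
  have neg: "integral\<^sup>L (add_point_mass M c a) (\<lambda>x. max 0 (- f x))
      = integral\<^sup>L M (\<lambda>x. max 0 (- f x)) + c * max 0 (- f a)"
    using f by (intro nonneg) auto
  have "c * f a = c * max 0 (f a) - c * max 0 (- f a)"
    by (cases "f a \<ge> 0") auto
  then show ?thesis
    using pos_neg[OF f] pos_neg[OF integrable_add_point_mass[OF f a]] pos neg by simp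
qed

section \<open>Motzkin paths\<close>

(* The off-diagonal part of M_1: (M_1 f)_n = sigma f_n + neighbour_sum f n. *)
definition neighbour_sum :: "(nat \<Rightarrow> real) \<Rightarrow> nat \<Rightarrow> real" where
  "neighbour_sum f n = f (Suc n) + (if n = 0 then 0 else f (n - 1))"

lemma mult_neighbour_sum: "c * neighbour_sum f n = neighbour_sum (\<lambda>k. c * f k) n"
  by (simp add: neighbour_sum_def distrib_left)

definition motzkin_weight_sum :: "real \<Rightarrow> nat \<Rightarrow> nat \<Rightarrow> nat \<Rightarrow> real" where
  "motzkin_weight_sum \<sigma> L m n = (\<Sum>\<gamma>\<in>motzkin_paths L m n. motzkin_weight \<sigma> \<gamma>)"

lemma motzkin_paths_0: "motzkin_paths 0 m n = (if m = n then {[m]} else {})"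
  by (auto simp: motzkin_paths_def length_Suc_conv)

(* With truncated subtraction, {m - 1..m + 1} is the set of neighbours of m also for m = 0. *)
lemma Cons_in_motzkin_paths_Suc_iff:
  assumes "\<gamma> \<noteq> []"
  shows "m # \<gamma> \<in> motzkin_paths (Suc L) m n
    \<longleftrightarrow> \<gamma> ! 0 \<in> {m - 1..m + 1} \<and> \<gamma> \<in> motzkin_paths L (\<gamma> ! 0) n"
proof -
  have "{1..Suc L} = insert 1 (Suc ` {1..L})" by (auto simp: image_iff)
  then have steps: "(\<forall>k\<in>{1..Suc L}. Q k) \<longleftrightarrow> Q 1 \<and> (\<forall>k\<in>{1..L}. Q (Suc k))" for Q
    by (simp del: image_Suc_atLeastAtMost)
  have "\<bar>int a - int m\<bar> \<le> 1 \<longleftrightarrow> a \<in> {m - 1..m + 1}" for a by auto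
  then show ?thesis
    using assms unfolding motzkin_paths_def steps by (auto simp: nth_Cons')
qed

lemma motzkin_paths_Suc:
  "motzkin_paths (Suc L) m n = (\<Union>m'\<in>{m - 1..m + 1}. (#) m ` motzkin_paths L m' n)"
proof (intro set_eqI iffI)
  fix \<gamma>
  assume \<gamma>: "\<gamma> \<in> motzkin_paths (Suc L) m n"
  then have "length \<gamma> = Suc (Suc L)" "\<gamma> ! 0 = m" by (auto simp: motzkin_paths_def)
  then obtain \<delta> where "\<gamma> = m # \<delta>" "\<delta> \<noteq> []" by (cases \<gamma>) fastforce+
  with \<gamma> show "\<gamma> \<in> (\<Union>m'\<in>{m - 1..m + 1}. (#) m ` motzkin_paths L m' n)"
    using Cons_in_motzkin_paths_Suc_iff by blast
next
  fix \<gamma>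
  assume "\<gamma> \<in> (\<Union>m'\<in>{m - 1..m + 1}. (#) m ` motzkin_paths L m' n)"
  then obtain m' \<delta> where "m' \<in> {m - 1..m + 1}" "\<delta> \<in> motzkin_paths L m' n" "\<gamma> = m # \<delta>"
    by blast
  moreover from this have "\<delta> \<noteq> []" "\<delta> ! 0 = m'" by (auto simp: motzkin_paths_def)
  ultimately show "\<gamma> \<in> motzkin_paths (Suc L) m n"
    using Cons_in_motzkin_paths_Suc_iff by blast
qed

lemma finite_motzkin_paths: "finite (motzkin_paths L m n)"
  by (induction L arbitrary: m) (simp_all add: motzkin_paths_0 motzkin_paths_Suc)

lemma motzkin_weight_Cons:
  assumes "\<gamma> \<noteq> []"
  shows "motzkin_weight \<sigma> (m # \<gamma>) = (if \<gamma> ! 0 = m then \<sigma> else 1) * motzkin_weight \<sigma> \<gamma>"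
proof -
  obtain N where N: "length \<gamma> = Suc N" using assms by (cases \<gamma>) auto
  define F where "F = {k \<in> {1..N}. \<gamma> ! k = \<gamma> ! (k - 1)}"
  have "{1..Suc N} = insert 1 (Suc ` {1..N})" by (auto simp: image_iff)
  then have "{k \<in> {1..Suc N}. (m # \<gamma>) ! k = (m # \<gamma>) ! (k - 1)}
      = (if \<gamma> ! 0 = m then {1} else {}) \<union> Suc ` F"
    by (auto simp: F_def nth_Cons' simp del: image_Suc_atLeastAtMost)
  moreover have "card ((if \<gamma> ! 0 = m then {1} else {}) \<union> Suc ` F) = (if \<gamma> ! 0 = m then 1 else 0) + card F"
    by (subst card_Un_disjoint) (auto simp: F_def card_image)
  ultimately show ?thesis
    using N by (simp add: motzkin_weight_def F_def power_add)
qed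

lemma motzkin_weight_singleton: "motzkin_weight \<sigma> [m] = 1"
proof -
  have "{k \<in> {1..length [m] - 1}. [m] ! k = [m] ! (k - 1)} = {}" by auto
  then show ?thesis by (simp only: motzkin_weight_def) simp
qed

lemma motzkin_weight_sum_0: "motzkin_weight_sum \<sigma> 0 m n = (if m = n then 1 else 0)"
  by (simp add: motzkin_weight_sum_def motzkin_paths_0 motzkin_weight_singleton)

lemma sum_atLeastAtMost_neighbours:
  "(\<Sum>k\<in>{m - 1..m + 1}. (if k = m then \<sigma> else 1) * f k) = \<sigma> * f m + neighbour_sum f m"
proof (cases m)
  case 0
  then have "{m - 1..m + 1} = {0, 1}" by auto
  then show ?thesis using 0 by (simp add: neighbour_sum_def)
next
  case (Suc j)
  then have "{m - 1..m + 1} = {j, Suc j, Suc (Suc j)}" by auto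
  then show ?thesis using Suc by (simp add: neighbour_sum_def)
qed

lemma motzkin_weight_sum_Suc:
  "motzkin_weight_sum \<sigma> (Suc L) m n
    = \<sigma> * motzkin_weight_sum \<sigma> L m n + neighbour_sum (\<lambda>k. motzkin_weight_sum \<sigma> L k n) m"
proof -
  have "motzkin_weight_sum \<sigma> (Suc L) m n
      = (\<Sum>m'\<in>{m - 1..m + 1}. \<Sum>\<gamma>\<in>motzkin_paths L m' n. motzkin_weight \<sigma> (m # \<gamma>))"
  proof -
    have "(#) m ` motzkin_paths L i n \<inter> (#) m ` motzkin_paths L j n = {}" if "i \<noteq> j" for i j
      using that by (auto simp: motzkin_paths_def)
    then show ?thesis
      unfolding motzkin_weight_sum_def motzkin_paths_Suc
      by (simp add: sum.UNION_disjoint finite_motzkin_paths sum.reindex)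
  qed
  also have "\<dots> = (\<Sum>m'\<in>{m - 1..m + 1}. (if m' = m then \<sigma> else 1) * motzkin_weight_sum \<sigma> L m' n)"
  proof -
    have "motzkin_weight \<sigma> (m # \<gamma>) = (if m' = m then \<sigma> else 1) * motzkin_weight \<sigma> \<gamma>"
      if "\<gamma> \<in> motzkin_paths L m' n" for \<gamma> m'
      using that by (subst motzkin_weight_Cons) (auto simp: motzkin_paths_def)
    then show ?thesis
      unfolding motzkin_weight_sum_def sum_distrib_left by (intro sum.cong) auto
  qed
  also have "\<dots> = \<sigma> * motzkin_weight_sum \<sigma> L m n + neighbour_sum (\<lambda>k. motzkin_weight_sum \<sigma> L k n) m"
    by (rule sum_atLeastAtMost_neighbours)
  finally show ?thesis .
qed

lemma motzkin_weight_sum_eq_0: "m + L < n \<Longrightarrow> motzkin_weight_sum \<sigma> L m n = 0"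
proof (induction L arbitrary: m)
  case (Suc L)
  then show ?case
    using Suc.IH[of m] Suc.IH[of "Suc m"] Suc.IH[of "m - 1"]
    by (simp add: motzkin_weight_sum_Suc neighbour_sum_def)
qed (simp add: motzkin_weight_sum_0)

lemma sums_neighbour_sum:
  assumes "\<And>k. (\<lambda>n. f n k) sums s k"
  shows "(\<lambda>n. neighbour_sum (f n) m) sums neighbour_sum s m"
  using assms by (cases m) (simp_all add: neighbour_sum_def sums_add)

lemma motzkin_series_0: "(\<Sum>n. \<rho> ^ n * motzkin_weight_sum \<sigma> 0 m n) = \<rho> ^ m"
  by (subst suminf_finite[of "{m}"]) (auto simp: motzkin_weight_sum_0)

lemma motzkin_series_Suc:
  "(\<Sum>n. \<rho> ^ n * motzkin_weight_sum \<sigma> (Suc L) m n)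
    = \<sigma> * (\<Sum>n. \<rho> ^ n * motzkin_weight_sum \<sigma> L m n)
      + neighbour_sum (\<lambda>k. \<Sum>n. \<rho> ^ n * motzkin_weight_sum \<sigma> L k n) m"
proof -
  have sums: "(\<lambda>n. \<rho> ^ n * motzkin_weight_sum \<sigma> L k n)
      sums (\<Sum>n. \<rho> ^ n * motzkin_weight_sum \<sigma> L k n)" for k
    by (intro summable_sums summable_finite[of "{..k + L}"]) (auto simp: motzkin_weight_sum_eq_0)
  have "(\<lambda>n. \<rho> ^ n * motzkin_weight_sum \<sigma> (Suc L) m n)
      = (\<lambda>n. \<sigma> * (\<rho> ^ n * motzkin_weight_sum \<sigma> L m n)
          + neighbour_sum (\<lambda>k. \<rho> ^ n * motzkin_weight_sum \<sigma> L k n) m)"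
    by (simp add: motzkin_weight_sum_Suc distrib_left mult_neighbour_sum mult.left_commute)
  also have "\<dots> sums (\<sigma> * (\<Sum>n. \<rho> ^ n * motzkin_weight_sum \<sigma> L m n)
      + neighbour_sum (\<lambda>k. \<Sum>n. \<rho> ^ n * motzkin_weight_sum \<sigma> L k n) m)"
    by (intro sums_add sums_mult sums_neighbour_sum sums)
  finally show ?thesis by (rule sums_unique[symmetric])
qed

section \<open>Chebyshev polynomials and the semicircle weight\<close>

lemma cheb_u_recurrence: "x * cheb_u n x = neighbour_sum (\<lambda>k. cheb_u k x) n"
  by (cases n) (auto simp: neighbour_sum_def)

lemma continuous_on_cheb_u [continuous_intros]: "continuous_on S (cheb_u n)"
proof (induction n rule: induct_nat_012)
  case 0
  have "cheb_u 0 = (\<lambda>x. 1)" by auto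
  then show ?case by simp
next
  case 1
  have "cheb_u (Suc 0) = (\<lambda>x. x)" by auto
  then show ?case by simp
next
  case (ge2 n)
  have "cheb_u (Suc (Suc n)) = (\<lambda>x. x * cheb_u (Suc n) x - cheb_u n x)" by auto
  then show ?case using ge2 by (simp add: continuous_on_diff continuous_on_mult)
qed

lemma cheb_u_cos: "cheb_u n (2 * cos t) * sin t = sin ((real n + 1) * t)"
proof (induction n rule: induct_nat_012)
  case 1
  then show ?case by (simp add: sin_double)
next
  case (ge2 n)
  define a where "a = (real n + 2) * t"
  have "cheb_u (Suc (Suc n)) (2 * cos t) * sin t
      = 2 * cos t * (cheb_u (Suc n) (2 * cos t) * sin t) - cheb_u n (2 * cos t) * sin t"
    by (simp add: algebra_simps)
  also have "\<dots> = 2 * cos t * sin a - sin (a - t)"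
    using ge2 by (simp add: a_def algebra_simps)
  also have "\<dots> = sin (a + t)"
    by (simp add: sin_add sin_diff algebra_simps)
  finally show ?case by (simp add: a_def algebra_simps)
qed simp

lemma cheb_u_ge:
  assumes "y \<ge> 2"
  shows "real n + 1 \<le> cheb_u n y"
proof -
  have "real n + 1 \<le> cheb_u n y \<and> cheb_u n y + 1 \<le> cheb_u (Suc n) y"
  proof (induction n)
    case (Suc n)
    have "2 * cheb_u (Suc n) y \<le> y * cheb_u (Suc n) y"
      using Suc assms by (intro mult_right_mono) auto
    then have "cheb_u (Suc n) y + 1 \<le> y * cheb_u (Suc n) y - cheb_u n y"
      using Suc.IH by linarith
    then show ?case using Suc.IH by simp
  qed (use assms in simp)
  then show ?thesis ..
qed

lemma cheb_u_plus_inverse: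
  fixes \<rho> :: real
  assumes "\<rho> \<noteq> 0"
  shows "(\<rho> - 1 / \<rho>) * cheb_u n (\<rho> + 1 / \<rho>) = \<rho> ^ Suc n - (1 / \<rho>) ^ Suc n"
proof (induction n rule: induct_nat_012)
  case 1
  then show ?case by (simp add: algebra_simps power2_eq_square)
next
  case (ge2 n)
  define a where "a = 1 / \<rho>"
  have "\<rho> * a = 1" using assms by (simp add: a_def)
  then have shift: "(\<rho> + a) * (\<rho> ^ Suc k - a ^ Suc k) = \<rho> ^ Suc (Suc k) - a ^ Suc (Suc k) + (\<rho> ^ k - a ^ k)"
    for k
    by (simp add: algebra_simps flip: mult.assoc)
  have "(\<rho> - a) * cheb_u (Suc (Suc n)) (\<rho> + a)
      = (\<rho> + a) * ((\<rho> - a) * cheb_u (Suc n) (\<rho> + a)) - (\<rho> - a) * cheb_u n (\<rho> + a)"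
    by (simp add: algebra_simps)
  also have "\<dots> = (\<rho> + a) * (\<rho> ^ Suc (Suc n) - a ^ Suc (Suc n)) - (\<rho> ^ Suc n - a ^ Suc n)"
    by (simp only: ge2[folded a_def])
  also have "\<dots> = \<rho> ^ Suc (Suc (Suc n)) - a ^ Suc (Suc (Suc n))"
    by (simp only: shift)
  finally show ?case unfolding a_def .
qed simp

(* Substitution x = 2 cos t in a form that allows h to be unbounded at the endpoints,
   as mu_density 1 is at x = 2. *)
lemma has_integral_cos_substitution:
  fixes h \<Phi> :: "real \<Rightarrow> real"
  assumes cont: "continuous_on {0..pi} \<Phi>"
    and deriv: "\<And>t. t \<in> {0<..<pi} \<Longrightarrow> (\<Phi> has_real_derivative h (2 * cos t) * (2 * sin t)) (at t)"
  shows "(h has_integral \<Phi> pi - \<Phi> 0) {-2..2}"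
proof -
  define G where "G x = - \<Phi> (arccos (x / 2))" for x
  have "(h has_integral G 2 - G (-2)) {-2..2}"
  proof (rule fundamental_theorem_of_calculus_interior)
    show "continuous_on {-2..2} G"
      unfolding G_def
      by (intro continuous_on_minus continuous_on_compose2[OF cont] continuous_on_arccos
          continuous_on_divide continuous_on_id continuous_on_const)
        (auto intro!: arccos_lbound arccos_ubound)
    fix x :: real
    assume x: "x \<in> {-2<..<2}"
    define t where "t = arccos (x / 2)"
    have t: "t \<in> {0<..<pi}" using arccos_lt_bounded[of "x / 2"] x by (simp add: t_def)
    have cos_t: "2 * cos t = x" using x by (simp add: t_def)
    have sin_t: "sin t = sqrt (1 - (x / 2)\<^sup>2)" using x by (simp add: t_def sin_arccos)
    have "sin t > 0" using t by (simp add: sin_gt_zero)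
    have "((\<lambda>x. arccos (x / 2)) has_real_derivative inverse (- sin t) * (1 / 2)) (at x)"
      using x unfolding sin_t by (auto intro!: DERIV_chain2[OF DERIV_arccos] derivative_eq_intros)
    from DERIV_minus[OF DERIV_chain2[OF deriv[OF t, unfolded t_def] this[unfolded t_def]]]
    have "(G has_real_derivative - (h (2 * cos t) * (2 * sin t) * (inverse (- sin t) * (1 / 2)))) (at x)"
      unfolding G_def t_def .
    then have "(G has_real_derivative h x) (at x)"
      using \<open>sin t > 0\<close> by (simp add: cos_t)
    then show "(G has_vector_derivative h x) (at x)"
      by (simp add: has_real_derivative_iff_has_vector_derivative)
  qed auto
  then show ?thesis by (simp add: G_def)
qed

lemma sqrt_four_minus_cos_square:
  assumes "t \<in> {0<..<pi}"
  shows "sqrt (4 - (2 * cos t)\<^sup>2) = 2 * sin t"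
proof -
  have "4 - (2 * cos t)\<^sup>2 = (2 * sin t)\<^sup>2"
    by (simp add: sin_squared_eq algebra_simps)
  moreover have "sin t > 0" using assms by (simp add: sin_gt_zero)
  ultimately show ?thesis by (simp only: real_sqrt_abs)
qed

lemma has_integral_cheb_u_semicircle:
  "((\<lambda>x. cheb_u n x * sqrt (4 - x\<^sup>2)) has_integral (if n = 0 then 2 * pi else 0)) {-2..2}"
proof -
  define \<Phi> where "\<Phi> t = (if n = 0 then 2 * t else 2 * sin (real n * t) / real n) - 2 * sin ((real n + 2) * t) / (real n + 2)"
    for t :: real
  have "((\<lambda>x. cheb_u n x * sqrt (4 - x\<^sup>2)) has_integral \<Phi> pi - \<Phi> 0) {-2..2}"
  proof (rule has_integral_cos_substitution)
    show "continuous_on {0..pi} \<Phi>" unfolding \<Phi>_def by (cases "n = 0") (intro continuous_intros; simp)+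
    fix t :: real
    assume t: "t \<in> {0<..<pi}"
    have "cheb_u n (2 * cos t) * sqrt (4 - (2 * cos t)\<^sup>2) * (2 * sin t)
        = 4 * (cheb_u n (2 * cos t) * sin t) * sin t"
      unfolding sqrt_four_minus_cos_square[OF t] by (simp add: algebra_simps)
    also have "\<dots> = 4 * sin ((real n + 1) * t) * sin t"
      by (simp only: cheb_u_cos)
    also have "\<dots> = 2 * cos (real n * t) - 2 * cos ((real n + 2) * t)"
      using cos_diff[of "(real n + 1) * t" t] cos_add[of "(real n + 1) * t" t] by (simp add: algebra_simps)
    finally show "(\<Phi> has_real_derivative cheb_u n (2 * cos t) * sqrt (4 - (2 * cos t)\<^sup>2) * (2 * sin t)) (at t)"
      unfolding \<Phi>_def by (cases "n = 0") (auto intro!: derivative_eq_intros)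
  qed
  moreover have "\<Phi> pi - \<Phi> 0 = (if n = 0 then 2 * pi else 0)"
    using sin_npi[of n] sin_npi[of "n + 2"] by (simp add: \<Phi>_def algebra_simps)
  ultimately show ?thesis by simp
qed

section \<open>The measure mu\<close>

lemma four_minus_square_pos:
  fixes x :: real
  assumes "x \<in> {-2<..<2}"
  shows "0 < 4 - x\<^sup>2"
proof -
  have "4 - x\<^sup>2 = (2 - x) * (2 + x)" by (simp add: power2_eq_square algebra_simps)
  then show ?thesis using assms by simp
qed

lemma mu_density_denominator_pos:
  fixes x \<rho> :: real
  assumes "x \<in> {-2<..<2}"
  shows "0 < 1 - \<rho> * x + \<rho>\<^sup>2"
proof -
  have "1 - \<rho> * x + \<rho>\<^sup>2 = (\<rho> - x / 2)\<^sup>2 + (4 - x\<^sup>2) / 4"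
    by (simp add: power2_eq_square field_simps)
  moreover have "0 < (4 - x\<^sup>2) / 4" using four_minus_square_pos[OF assms] by simp
  ultimately show ?thesis
    using zero_le_power2[of "\<rho> - x / 2"] by linarith
qed

lemma mu_density_nonneg: "0 \<le> mu_density \<rho> x"
  using mu_density_denominator_pos[of x \<rho>] four_minus_square_pos[of x]
  by (auto simp: mu_density_def indicator_def)

lemma borel_measurable_mu_density [measurable]: "mu_density \<rho> \<in> borel_measurable borel"
  unfolding mu_density_def by measurable

lemma mu_density_mult_denominator:
  "mu_density \<rho> x * (1 - \<rho> * x + \<rho>\<^sup>2) = indicator {-2<..<2} x * sqrt (4 - x\<^sup>2) / (2 * pi)"
  using mu_density_denominator_pos[of x \<rho>] by (auto simp: mu_density_def indicator_def)

lemma mu_density_le: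
  assumes "\<rho> > 0"
  shows "mu_density \<rho> x \<le> mu_density 1 x / \<rho>"
proof (cases "x \<in> {-2<..<2}")
  case True
  have "\<rho> * (2 - x) \<le> 1 - \<rho> * x + \<rho>\<^sup>2"
    using zero_le_power2[of "1 - \<rho>"] by (simp add: power2_eq_square algebra_simps)
  then have "sqrt (4 - x\<^sup>2) / (2 * pi * (1 - \<rho> * x + \<rho>\<^sup>2))
      \<le> sqrt (4 - x\<^sup>2) / (2 * pi * (\<rho> * (2 - x)))"
    using True assms four_minus_square_pos[OF True] mu_density_denominator_pos[OF True, of \<rho>]
    by (intro divide_left_mono mult_left_mono mult_pos_pos) auto
  then show ?thesis
    using True by (simp add: mu_density_def ac_simps)
qed (simp add: mu_density_def)

lemma has_integral_mu_density_1: "(mu_density 1 has_integral 1) UNIV"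
proof -
  define \<Phi> where "\<Phi> t = (t + sin t) / pi" for t
  have "(mu_density 1 has_integral \<Phi> pi - \<Phi> 0) {-2..2}"
  proof (rule has_integral_cos_substitution)
    show "continuous_on {0..pi} \<Phi>" unfolding \<Phi>_def by (intro continuous_intros) auto
    fix t :: real
    assume t: "t \<in> {0<..<pi}"
    have "cos t < 1" "- 1 < cos t"
      using t cos_monotone_0_pi[of 0 t] cos_monotone_0_pi[of t pi] by auto
    then have "mu_density 1 (2 * cos t) * (2 * sin t)
        = sqrt (4 - (2 * cos t)\<^sup>2) * (2 * sin t) / (2 * pi * (2 - 2 * cos t))"
      by (simp add: mu_density_def)
    also have "\<dots> = (1 + cos t) / pi"
      using \<open>cos t < 1\<close> unfolding sqrt_four_minus_cos_square[OF t]
      by (simp add: field_simps power2_eq_square sin_squared_eq flip: power2_eq_square)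
    finally show "(\<Phi> has_real_derivative mu_density 1 (2 * cos t) * (2 * sin t)) (at t)"
      unfolding \<Phi>_def by (auto intro!: derivative_eq_intros)
  qed
  moreover have "\<Phi> pi - \<Phi> 0 = 1" by (simp add: \<Phi>_def)
  ultimately have "(mu_density 1 has_integral 1) {-2..2}" by simp
  then show ?thesis
    by (rule has_integral_on_superset) (auto simp: mu_density_def)
qed

lemma integrable_mu_density_1: "integrable lborel (mu_density 1)"
  using has_integral_mu_density_1 mu_density_nonneg
  by (intro integrableI_nn_integral_finite[where x = 1] nn_integral_has_integral_lborel) auto

lemma integral_mu_density_1: "(LINT x|lborel. mu_density 1 x) = 1"
  using has_integral_integral_real[OF integrable_mu_density_1] has_integral_mu_density_1
  by (rule has_integral_unique)

lemma integrable_mu_density_mult: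
  fixes g :: "real \<Rightarrow> real"
  assumes "\<rho> > 0" and g: "continuous_on UNIV g"
  shows "integrable lborel (\<lambda>x. mu_density \<rho> x * g x)"
proof -
  have "bounded (g ` {-2..2})"
    by (intro compact_imp_bounded compact_continuous_image continuous_on_subset[OF g]) auto
  then obtain B where B: "\<And>x. x \<in> {-2..2} \<Longrightarrow> \<bar>g x\<bar> \<le> B"
    unfolding bounded_iff by (metis imageI real_norm_def)
  show ?thesis
  proof (rule Bochner_Integration.integrable_bound)
    show "integrable lborel (\<lambda>x. B / \<rho> * mu_density 1 x)"
      using integrable_mu_density_1 by simp
    show "(\<lambda>x. mu_density \<rho> x * g x) \<in> borel_measurable lborel"
      using borel_measurable_continuous_onI[OF g] by measurable
    show "AE x in lborel. norm (mu_density \<rho> x * g x) \<le> norm (B / \<rho> * mu_density 1 x)"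
    proof (rule AE_I2)
      fix x :: real
      show "norm (mu_density \<rho> x * g x) \<le> norm (B / \<rho> * mu_density 1 x)"
      proof (cases "x \<in> {-2<..<2}")
        case True
        then have "\<bar>g x\<bar> \<le> B" by (intro B) auto
        have "norm (mu_density \<rho> x * g x) = mu_density \<rho> x * \<bar>g x\<bar>"
          by (simp add: abs_mult mu_density_nonneg)
        also have "\<dots> \<le> mu_density 1 x / \<rho> * B"
          using \<open>\<bar>g x\<bar> \<le> B\<close> mu_density_le[OF \<open>\<rho> > 0\<close>] mu_density_nonneg \<open>\<rho> > 0\<close>
          by (intro mult_mono) auto
        also have "\<dots> = norm (B / \<rho> * mu_density 1 x)"
          using \<open>\<bar>g x\<bar> \<le> B\<close> \<open>\<rho> > 0\<close> mu_density_nonneg[of 1 x] by simp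
        finally show ?thesis .
      qed (simp add: mu_density_def)
    qed
  qed
qed

lemma mu_eq_add_point_mass:
  "mu \<rho> = add_point_mass (density lborel (mu_density \<rho>)) (max 0 (1 - 1 / \<rho>\<^sup>2)) (\<rho> + 1 / \<rho>)"
  by (simp add: mu_def add_point_mass_def)

lemma
  fixes g :: "real \<Rightarrow> real"
  assumes "\<rho> > 0" and g: "continuous_on UNIV g"
  shows integrable_mu: "integrable (mu \<rho>) g"
    and integral_mu: "integral\<^sup>L (mu \<rho>) g
      = (LINT x|lborel. mu_density \<rho> x * g x) + max 0 (1 - 1 / \<rho>\<^sup>2) * g (\<rho> + 1 / \<rho>)"
proof -
  have [measurable]: "g \<in> borel_measurable borel" using g by (rule borel_measurable_continuous_onI)
  have dens: "integrable (density lborel (mu_density \<rho>)) g"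
    using integrable_mu_density_mult[OF assms] mu_density_nonneg
    by (subst integrable_density) auto
  show "integrable (mu \<rho>) g"
    unfolding mu_eq_add_point_mass using dens by (rule integrable_add_point_mass) simp
  show "integral\<^sup>L (mu \<rho>) g
      = (LINT x|lborel. mu_density \<rho> x * g x) + max 0 (1 - 1 / \<rho>\<^sup>2) * g (\<rho> + 1 / \<rho>)"
    unfolding mu_eq_add_point_mass using dens mu_density_nonneg
    by (simp add: integral_add_point_mass integral_density)
qed

section \<open>Chebyshev moments of mu\<close>

definition cheb_moment :: "real \<Rightarrow> nat \<Rightarrow> real" where
  "cheb_moment \<rho> n = (LINT x|lborel. mu_density \<rho> x * cheb_u n x)"

lemma has_integral_mu_density_mult_denominator:
  "((\<lambda>x. mu_density \<rho> x * ((1 - \<rho> * x + \<rho>\<^sup>2) * cheb_u n x)) has_integral (if n = 0 then 1 else 0)) UNIV"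
proof -
  have "((\<lambda>x. cheb_u n x * sqrt (4 - x\<^sup>2) / (2 * pi)) has_integral (if n = 0 then 1 else 0)) {-2..2}"
    using has_integral_divide[OF has_integral_cheb_u_semicircle[of n], of "2 * pi"]
    by (cases "n = 0") simp_all
  moreover have "(\<lambda>x. mu_density \<rho> x * ((1 - \<rho> * x + \<rho>\<^sup>2) * cheb_u n x))
      = (\<lambda>x. if x \<in> {-2..2} then cheb_u n x * sqrt (4 - x\<^sup>2) / (2 * pi) else 0)"
  proof
    fix x :: real
    show "mu_density \<rho> x * ((1 - \<rho> * x + \<rho>\<^sup>2) * cheb_u n x)
        = (if x \<in> {-2..2} then cheb_u n x * sqrt (4 - x\<^sup>2) / (2 * pi) else 0)"
      using mu_density_mult_denominator[of \<rho> x]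
      by (cases "x = 2 \<or> x = -2") (auto simp: indicator_def mult.assoc[symmetric])
  qed
  ultimately show ?thesis
    by (simp only: has_integral_restrict_UNIV)
qed

lemma cheb_moment_recurrence:
  assumes "\<rho> > 0"
  shows "(1 + \<rho>\<^sup>2) * cheb_moment \<rho> n - \<rho> * neighbour_sum (cheb_moment \<rho>) n = (if n = 0 then 1 else 0)"
proof -
  have int_cheb: "integrable lborel (\<lambda>x. mu_density \<rho> x * cheb_u n x)"
    and int_x_cheb: "integrable lborel (\<lambda>x. mu_density \<rho> x * (x * cheb_u n x))"
    by (intro integrable_mu_density_mult[OF assms] continuous_intros)+
  have "neighbour_sum (cheb_moment \<rho>) n
      = (LINT x|lborel. mu_density \<rho> x * neighbour_sum (\<lambda>k. cheb_u k x) n)"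
    by (cases n)
      (simp_all add: neighbour_sum_def cheb_moment_def distrib_left integrable_mu_density_mult[OF assms]
        continuous_on_cheb_u del: cheb_u.simps)
  also have "\<dots> = (LINT x|lborel. mu_density \<rho> x * (x * cheb_u n x))"
    by (simp only: cheb_u_recurrence)
  finally have "(1 + \<rho>\<^sup>2) * cheb_moment \<rho> n - \<rho> * neighbour_sum (cheb_moment \<rho>) n
      = (LINT x|lborel. (1 + \<rho>\<^sup>2) * (mu_density \<rho> x * cheb_u n x) - \<rho> * (mu_density \<rho> x * (x * cheb_u n x)))"
    using int_cheb int_x_cheb by (simp add: cheb_moment_def)
  also have "\<dots> = (LINT x|lborel. mu_density \<rho> x * ((1 - \<rho> * x + \<rho>\<^sup>2) * cheb_u n x))"
    by (rule Bochner_Integration.integral_cong) (simp_all add: algebra_simps)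
  also have "\<dots> = (if n = 0 then 1 else 0)"
    using has_integral_integral_real[OF integrable_mu_density_mult[OF assms]]
      has_integral_mu_density_mult_denominator
    by (rule has_integral_unique) (intro continuous_intros)
  finally show ?thesis .
qed

lemma homogeneous_recurrence_solution:
  fixes E :: "nat \<Rightarrow> real"
  assumes "\<rho> \<noteq> 0" and rec: "\<And>n. (1 + \<rho>\<^sup>2) * E n = \<rho> * neighbour_sum E n"
  shows "E n = E 0 * cheb_u n (\<rho> + 1 / \<rho>)"
proof -
  have step: "E (Suc n) = (\<rho> + 1 / \<rho>) * E n - (if n = 0 then 0 else E (n - 1))" for n
    using rec[of n] assms(1) by (simp add: neighbour_sum_def field_simps power2_eq_square)
  show ?thesis
  proof (induction n rule: induct_nat_012)
    case (ge2 n)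
    then show ?case using step[of "Suc n"] by (simp add: algebra_simps)
  qed (use step[of 0] in simp_all)
qed

lemma multiple_of_cheb_u_unbounded:
  assumes "y \<ge> 2" and bounded: "\<And>n. \<bar>c * cheb_u n y\<bar> \<le> K"
  shows "c = 0"
proof (rule ccontr)
  assume "c \<noteq> 0"
  obtain n :: nat where "K / \<bar>c\<bar> < real n"
    using reals_Archimedean2 by blast
  then have "K < \<bar>c\<bar> * real n"
    using \<open>c \<noteq> 0\<close> by (simp add: field_simps)
  also have "\<dots> \<le> \<bar>c * cheb_u n y\<bar>"
    using cheb_u_ge[OF assms(1), of n] by (simp add: abs_mult mult_left_mono)
  finally show False using bounded[of n] by simp
qed

lemma abs_cheb_moment_le:
  assumes "\<rho> > 0" "\<rho> \<noteq> 1"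
  shows "\<bar>cheb_moment \<rho> n\<bar> \<le> 4 / (pi * (1 - \<rho>)\<^sup>2)"
proof -
  define K where "K = 1 / (pi * (1 - \<rho>)\<^sup>2)"
  have "\<bar>cheb_moment \<rho> n\<bar> \<le> (LINT x|lborel. indicator {-2<..<2::real} x * K)"
    unfolding cheb_moment_def
  proof (rule integral_abs_bound_integral)
    show "integrable lborel (\<lambda>x. mu_density \<rho> x * cheb_u n x)"
      using assms(1) by (intro integrable_mu_density_mult continuous_intros)
    show "integrable lborel (\<lambda>x. indicator {-2<..<2::real} x * K)"
      by (simp add: integrable_real_mult_indicator)
    fix x :: real
    show "\<bar>mu_density \<rho> x * cheb_u n x\<bar> \<le> indicator {-2<..<2} x * K"
    proof (cases "x \<in> {-2<..<2}")
      case True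
      define t where "t = arccos (x / 2)"
      have t: "t \<in> {0<..<pi}" using arccos_lt_bounded[of "x / 2"] True by (simp add: t_def)
      have x: "x = 2 * cos t" using True by (simp add: t_def)
      have "\<bar>cheb_u n x * sqrt (4 - x\<^sup>2)\<bar> = 2 * \<bar>sin ((real n + 1) * t)\<bar>"
        unfolding x sqrt_four_minus_cos_square[OF t] by (simp add: abs_mult flip: cheb_u_cos)
      also have "\<dots> \<le> 2" by simp
      finally have num: "\<bar>cheb_u n x * sqrt (4 - x\<^sup>2)\<bar> \<le> 2" .
      have den: "(1 - \<rho>)\<^sup>2 \<le> 1 - \<rho> * x + \<rho>\<^sup>2"
        using True assms(1) by (simp add: power2_eq_square algebra_simps)
      have "\<bar>mu_density \<rho> x * cheb_u n x\<bar>
          = \<bar>cheb_u n x * sqrt (4 - x\<^sup>2)\<bar> / (2 * pi * (1 - \<rho> * x + \<rho>\<^sup>2))"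
        using True mu_density_denominator_pos[OF True, of \<rho>]
        by (simp add: mu_density_def abs_mult)
      also have "\<dots> \<le> 2 / (2 * pi * (1 - \<rho>)\<^sup>2)"
        using num den assms by (intro frac_le mult_left_mono mult_pos_pos) auto
      finally show ?thesis using True by (simp add: K_def)
    qed (simp add: mu_density_def)
  qed
  also have "\<dots> = 4 / (pi * (1 - \<rho>)\<^sup>2)"
    by (simp add: K_def)
  finally show ?thesis .
qed

lemma cheb_moment_eq:
  assumes "\<rho> > 0"
  shows "cheb_moment \<rho> n = (if \<rho> \<le> 1 then \<rho> ^ n else (1 / \<rho>) ^ (n + 2))"
proof -
  define T where "T n = (if \<rho> \<le> 1 then \<rho> ^ n else (1 / \<rho>) ^ (n + 2))" for n
  have T_rec: "(1 + \<rho>\<^sup>2) * T n - \<rho> * neighbour_sum T n = (if n = 0 then 1 else 0)" for n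
    using assms by (cases n) (auto simp: T_def neighbour_sum_def field_simps power2_eq_square)
  have T_le: "\<bar>T n\<bar> \<le> 1" for n
  proof (cases "\<rho> \<le> 1")
    case False
    then have "(1 / \<rho>) ^ (n + 2) \<le> 1" by (intro power_le_one) auto
    then show ?thesis using False by (simp add: T_def)
  qed (use assms in \<open>simp add: T_def power_le_one\<close>)
  define E where "E n = cheb_moment \<rho> n - T n" for n
  have "(1 + \<rho>\<^sup>2) * E n = \<rho> * neighbour_sum E n" for n
    using cheb_moment_recurrence[OF assms, of n] T_rec[of n]
    by (simp add: E_def neighbour_sum_def algebra_simps)
  with assms have E: "E n = E 0 * cheb_u n (\<rho> + 1 / \<rho>)" for n
    by (intro homogeneous_recurrence_solution) auto
  have "E 0 = 0"
  proof (cases "\<rho> = 1")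
    case True
    then show ?thesis using integral_mu_density_1 by (simp add: E_def T_def cheb_moment_def)
  next
    case False
    have "(\<rho> - 1)\<^sup>2 \<ge> 0" by simp
    then have "2 \<le> \<rho> + 1 / \<rho>"
      using assms by (simp add: field_simps power2_eq_square)
    moreover have "\<bar>E 0 * cheb_u n (\<rho> + 1 / \<rho>)\<bar> \<le> 4 / (pi * (1 - \<rho>)\<^sup>2) + 1" for n
    proof -
      have "\<bar>E n\<bar> \<le> 4 / (pi * (1 - \<rho>)\<^sup>2) + 1"
        using abs_cheb_moment_le[OF assms False, of n] T_le[of n] unfolding E_def by linarith
      then show ?thesis by (simp only: E[of n, symmetric])
    qed
    ultimately show ?thesis by (rule multiple_of_cheb_u_unbounded)
  qed
  then show ?thesis using E[of n] by (simp add: E_def T_def)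
qed

lemma integral_mu_cheb_u:
  assumes "\<rho> > 0"
  shows "(\<integral>x. cheb_u n x \<partial>mu \<rho>) = \<rho> ^ n"
proof -
  have "(\<integral>x. cheb_u n x \<partial>mu \<rho>)
      = cheb_moment \<rho> n + max 0 (1 - 1 / \<rho>\<^sup>2) * cheb_u n (\<rho> + 1 / \<rho>)"
    using integral_mu[OF assms continuous_on_cheb_u] by (simp add: cheb_moment_def)
  also have "\<dots> = \<rho> ^ n"
  proof (cases "\<rho> \<le> 1")
    case True
    then have "1 \<le> 1 / \<rho>\<^sup>2" using assms by (simp add: field_simps power_le_one)
    then show ?thesis using True assms by (simp add: cheb_moment_eq)
  next
    case False
    then have "1 / \<rho>\<^sup>2 \<le> 1" by (simp add: field_simps power_le_one)
    then have "max 0 (1 - 1 / \<rho>\<^sup>2) = (\<rho> - 1 / \<rho>) / \<rho>"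
      using assms by (simp add: field_simps power2_eq_square)
    then have "max 0 (1 - 1 / \<rho>\<^sup>2) * cheb_u n (\<rho> + 1 / \<rho>)
        = (\<rho> - 1 / \<rho>) * cheb_u n (\<rho> + 1 / \<rho>) / \<rho>"
      by simp
    also have "\<dots> = \<rho> ^ n - (1 / \<rho>) ^ (n + 2)"
      using assms by (subst cheb_u_plus_inverse) (auto simp: field_simps)
    finally show ?thesis using False assms by (simp add: cheb_moment_eq)
  qed
  finally show ?thesis .
qed

lemma integral_mu_power_Suc:
  assumes "\<rho> > 0"
  shows "(\<integral>x. (x + \<sigma>) ^ Suc L * cheb_u m x \<partial>mu \<rho>)
    = \<sigma> * (\<integral>x. (x + \<sigma>) ^ L * cheb_u m x \<partial>mu \<rho>)
      + neighbour_sum (\<lambda>k. \<integral>x. (x + \<sigma>) ^ L * cheb_u k x \<partial>mu \<rho>) m"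
proof -
  have int: "integrable (mu \<rho>) (\<lambda>x. (x + \<sigma>) ^ L * cheb_u k x)" for k
    by (intro integrable_mu[OF assms] continuous_intros)
  have "(x + \<sigma>) ^ Suc L * cheb_u m x
      = \<sigma> * ((x + \<sigma>) ^ L * cheb_u m x) + neighbour_sum (\<lambda>k. (x + \<sigma>) ^ L * cheb_u k x) m" for x
  proof -
    have "(x + \<sigma>) ^ Suc L * cheb_u m x = \<sigma> * ((x + \<sigma>) ^ L * cheb_u m x) + (x + \<sigma>) ^ L * (x * cheb_u m x)"
      by (simp add: algebra_simps)
    then show ?thesis
      by (simp only: cheb_u_recurrence mult_neighbour_sum)
  qed
  then show ?thesis
    by (cases m) (simp_all add: neighbour_sum_def int del: cheb_u.simps)
qed

theorem lemma4p1:
  fixes \<sigma> \<rho>1 :: real and L m :: nat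
  assumes "\<sigma> > 0" and "\<rho>1 > 0" and "L \<ge> 1"
  shows "(\<Sum>n. \<rho>1 ^ n * (\<Sum>\<gamma>\<in>motzkin_paths L m n. motzkin_weight \<sigma> \<gamma>))
           = (\<integral>x. (x + \<sigma>) ^ L * cheb_u m x \<partial>mu \<rho>1)"
proof -
  have "(\<Sum>n. \<rho>1 ^ n * motzkin_weight_sum \<sigma> K k n) = (\<integral>x. (x + \<sigma>) ^ K * cheb_u k x \<partial>mu \<rho>1)"
    for K k
  proof (induction K arbitrary: k)
    case 0
    show ?case using integral_mu_cheb_u[OF assms(2)] by (simp add: motzkin_series_0)
  next
    case (Suc K)
    show ?case by (simp only: motzkin_series_Suc integral_mu_power_Suc[OF assms(2)] Suc.IH)
  qed
  then show ?thesis by (simp add: motzkin_weight_sum_def)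
qed

end
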